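(* Let $n\ge 2$ and let $\mathbf{x}=(x_1,\dots,x_n)\in\mathbb{R}^n$ be a vector whose entries are either all strictly positive or all strictly negative. Let $M$ be either $M=\mathbf{x}^T\mathbf{x}$ (a positive rank one matrix) or $M=-\mathbf{x}^T\mathbf{x}$ (a negative rank one matrix), and assume the off-diagonal entries $M_{ij}$, $i<j$, are pairwise distinct. Then for every $k>0$ and every $t\in[0,1]$, the $k$-th Betti curve of $M$ satisfies $\beta_k(t)=0$.
   Context: Betti curves of a symmetric matrix. Let $M$ be a real symmetric $n\times n$ matrix whose $\binom{n}{2}$ off-diagonal entries $M_{ij}$ ($i<j$) are pairwise distinct. The ordering matrix $\widehat{M}$ is defined by $\widehat{M}_{ij}=k$ if $M_{ij}$ is the $k$-th smallest off-diagonal entry. For $t\in[0,1]$, $G_t=G_t(M)$ is the graph on vertex set $\{1,\dots,n\}$ with edge set $\{\{i,j\} : \widehat{M}_{ij}\le t\binom{n}{2}\}$ (so edges are added in increasing order of the entries $M_{ij}$; $G_0$ has no edges and $G_1$ is complete). $X(G_t)$ is the clique complex of $G_t$ (every $k$-clique of $G_t$ is filled in by a $(k-1)$-dimensional simplex). The $i$-th Betti curve of $M$ is $\beta_i(t)=\operatorname{rank} H_i(X(G_t);\mathbf{k})$, with $H_i$ simplicial homology with coefficients in a fixed field $\mathbf{k}$. Here $\mathbf{x}$ is a row vector, so $\mathbf{x}^T\mathbf{x}$ is the $n\times n$ matrix with entries $x_ix_j$. *)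

theory Defs
  imports Complex_Main "HOL-Library.Function_Algebras"
begin

text \<open>Chains are functions from (nonempty finite) vertex sets to the coefficient
field 'k; a simplex is oriented by the increasing order of its (natural number) vertices.\<close>

definition fscale :: "'k::field \<Rightarrow> ('a \<Rightarrow> 'k) \<Rightarrow> ('a \<Rightarrow> 'k)" where
  "fscale c f = (\<lambda>v. c * f v)"

lemma vector_space_fscale: "vector_space (fscale :: 'k::field \<Rightarrow> ('a \<Rightarrow> 'k) \<Rightarrow> _)"
  by unfold_locales (auto simp: fscale_def algebra_simps fun_eq_iff)

definition simplices :: "nat set set \<Rightarrow> nat \<Rightarrow> nat set set" where
  "simplices K k = {\<sigma> \<in> K. card \<sigma> = k + 1}"

text \<open>Incidence number [sigma : tau]: if tau is sigma with its i-th vertex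
(in increasing order, counting from 0) removed, it is (-1)^i; otherwise 0.\<close>
definition incidence :: "nat set \<Rightarrow> nat set \<Rightarrow> 'k::field" where
  "incidence \<sigma> \<tau> =
     (if finite \<sigma> \<and> \<tau> \<noteq> {} \<and> \<tau> \<subseteq> \<sigma> \<and> card \<sigma> = card \<tau> + 1
      then (- 1) ^ card {v \<in> \<sigma>. v < the_elem (\<sigma> - \<tau>)} else 0)"

definition chains :: "nat set set \<Rightarrow> nat \<Rightarrow> (nat set \<Rightarrow> 'k::field) set" where
  "chains K k = {f. \<forall>\<sigma>. f \<sigma> \<noteq> 0 \<longrightarrow> \<sigma> \<in> simplices K k}"

definition boundary :: "nat set set \<Rightarrow> nat \<Rightarrow> (nat set \<Rightarrow> 'k::field) \<Rightarrow> (nat set \<Rightarrow> 'k)" where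
  "boundary K k f = (\<lambda>\<tau>. \<Sum>\<sigma>\<in>simplices K k. f \<sigma> * incidence \<sigma> \<tau>)"

definition cycles :: "nat set set \<Rightarrow> nat \<Rightarrow> (nat set \<Rightarrow> 'k::field) set" where
  "cycles K k = {f \<in> chains K k. boundary K k f = (\<lambda>_. 0)}"

definition boundaries :: "nat set set \<Rightarrow> nat \<Rightarrow> (nat set \<Rightarrow> 'k::field) set" where
  "boundaries K k = boundary K (k + 1) ` chains K (k + 1)"

definition betti :: "'k::field itself \<Rightarrow> nat set set \<Rightarrow> nat \<Rightarrow> nat" where
  "betti _ K k =
     vector_space.dim (fscale :: 'k \<Rightarrow> _) (cycles K k :: (nat set \<Rightarrow> 'k) set)
     - vector_space.dim (fscale :: 'k \<Rightarrow> _) (boundaries K k :: (nat set \<Rightarrow> 'k) set)"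

definition clique_complex :: "nat \<Rightarrow> (nat \<Rightarrow> nat \<Rightarrow> bool) \<Rightarrow> nat set set" where
  "clique_complex n E = {\<sigma>. \<sigma> \<noteq> {} \<and> \<sigma> \<subseteq> {..<n} \<and> (\<forall>i\<in>\<sigma>. \<forall>j\<in>\<sigma>. i \<noteq> j \<longrightarrow> E i j)}"

text \<open>Ordering matrix: position of M i j among the off-diagonal entries (i<j).\<close>
definition order_entry :: "nat \<Rightarrow> (nat \<Rightarrow> nat \<Rightarrow> real) \<Rightarrow> nat \<Rightarrow> nat \<Rightarrow> nat" where
  "order_entry n M i j = card {(a, b). a < b \<and> b < n \<and> M a b \<le> M (min i j) (max i j)}"

definition G_t :: "nat \<Rightarrow> (nat \<Rightarrow> nat \<Rightarrow> real) \<Rightarrow> real \<Rightarrow> nat \<Rightarrow> nat \<Rightarrow> bool" where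
  "G_t n M t i j \<longleftrightarrow> i < n \<and> j < n \<and> i \<noteq> j \<and>
     real (order_entry n M i j) \<le> t * real (n choose 2)"

definition betti_curve :: "'k::field itself \<Rightarrow> nat \<Rightarrow> (nat \<Rightarrow> nat \<Rightarrow> real) \<Rightarrow> nat \<Rightarrow> real \<Rightarrow> nat" where
  "betti_curve K n M k t = betti K (clique_complex n (G_t n M t)) k"

end

theory Submission
  imports Defs
begin

text \<open>
  If \<open>M i j = f i * g j\<close> with all \<open>g j > 0\<close> (which covers \<open>\<pm>x\<^sup>Tx\<close> for a vector of constant sign),
  then a vertex \<open>v\<close> minimising \<open>f\<close> minimises every column of \<open>M\<close>. Hence whenever \<open>{i,j}\<close> is an
  edge of \<open>G\<^sub>t\<close> with \<open>j \<noteq> v\<close>, the smaller entry \<open>M v j\<close> makes \<open>{v,j}\<close> an edge as well, so every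
  clique with at least one edge extends to a clique containing \<open>v\<close>. The clique complex is thus a
  cone with apex \<open>v\<close> up to isolated vertices, and the usual cone construction \<open>z \<mapsto> v * z\<close>
  shows that every \<open>k\<close>-cycle with \<open>k > 0\<close> is a boundary.
\<close>

definition simplicial_complex :: "nat set \<Rightarrow> nat set set \<Rightarrow> bool" where
  "simplicial_complex V K \<longleftrightarrow>
     finite V \<and> (\<forall>\<sigma>\<in>K. \<sigma> \<subseteq> V) \<and> (\<forall>\<sigma>\<in>K. \<forall>\<tau>. \<tau> \<subseteq> \<sigma> \<longrightarrow> \<tau> \<noteq> {} \<longrightarrow> \<tau> \<in> K)"

text \<open>Isolated vertices need not be joined to the apex, so only positive degrees are acyclic.\<close>
definition edge_cone_apex :: "nat set set \<Rightarrow> nat \<Rightarrow> bool" where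
  "edge_cone_apex K v \<longleftrightarrow> (\<forall>\<sigma>\<in>K. card \<sigma> \<ge> 2 \<longrightarrow> insert v \<sigma> \<in> K)"

definition cone_chain :: "nat set set \<Rightarrow> nat \<Rightarrow> nat \<Rightarrow> (nat set \<Rightarrow> 'k) \<Rightarrow> nat set \<Rightarrow> 'k::field" where
  "cone_chain K v k z \<tau> =
     (if v \<in> \<tau> \<and> \<tau> \<in> simplices K (k + 1) then incidence \<tau> (\<tau> - {v}) * z (\<tau> - {v}) else 0)"

lemma incidence_insert:
  assumes "finite S" "S \<noteq> {}" "a \<notin> S"
  shows "(incidence (insert a S) S :: 'k::field) = (-1) ^ card {u\<in>S. u < a}"
proof -
  have "insert a S - S = {a}" using assms by auto
  moreover have "{u \<in> insert a S. u < a} = {u\<in>S. u < a}" by auto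
  ultimately show ?thesis using assms unfolding incidence_def by (auto simp: card_insert_if)
qed

lemma incidence_insert_squared:
  assumes "finite S" "S \<noteq> {}" "a \<notin> S"
  shows "(incidence (insert a S) S :: 'k::field) * incidence (insert a S) S = 1"
  using assms by (simp add: incidence_insert flip: power_add)

lemma incidence_nonzero_imp_insert:
  assumes "(incidence \<sigma> \<rho> :: 'k::field) \<noteq> 0"
  obtains w where "w \<notin> \<rho>" "\<sigma> = insert w \<rho>"
proof -
  from assms have h: "finite \<sigma>" "\<rho> \<subseteq> \<sigma>" "card \<sigma> = card \<rho> + 1"
    unfolding incidence_def by (auto split: if_splits)
  moreover have "finite \<rho>" using h finite_subset by blast
  ultimately have "card (\<sigma> - \<rho>) = 1" by (simp add: card_Diff_subset)
  then obtain w where "\<sigma> - \<rho> = {w}" by (auto simp: card_Suc_eq)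
  then show ?thesis using h that by blast
qed

lemma incidence_infinite: "infinite \<rho> \<Longrightarrow> incidence \<sigma> \<rho> = 0"
  unfolding incidence_def using finite_subset by auto

lemma card_less_insert:
  assumes "finite S" "w \<notin> S" "w \<noteq> v"
  shows "card {u \<in> insert w S. u < v} = card {u\<in>S. u < v} + (if w < v then 1 else 0)"
proof -
  have "{u \<in> insert w S. u < v} = (if w < v then insert w {u\<in>S. u < v} else {u\<in>S. u < v})"
    by auto
  then show ?thesis using assms by auto
qed

text \<open>Removing \<open>v\<close> and \<open>w\<close> in the two possible orders gives opposite signs; this is the
  identity behind \<open>\<partial>\<partial> = 0\<close>.\<close>
lemma incidence_insert_insert:
  assumes "finite S" "S \<noteq> {}" "v \<notin> S" "w \<notin> S" "v \<noteq> w"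
  shows "(incidence (insert w (insert v S)) (insert w S) :: 'k::field)
           * incidence (insert w (insert v S)) (insert v S)
         = - (incidence (insert w S) S * incidence (insert v S) S)"
proof -
  define a where "a = card {u\<in>S. u < v}"
  define b where "b = card {u\<in>S. u < w}"
  have "(incidence (insert v (insert w S)) (insert w S) :: 'k)
      = (-1) ^ card {u \<in> insert w S. u < v}"
    by (rule incidence_insert) (use assms in auto)
  then have "(incidence (insert w (insert v S)) (insert w S) :: 'k)
      = (-1) ^ card {u \<in> insert w S. u < v}"
    by (simp add: insert_commute)
  also have "\<dots> = (-1) ^ (a + (if w < v then 1 else 0))"
    using assms by (simp only: a_def card_less_insert[OF assms(1,4) not_sym[OF assms(5)]])
  finally have vw: "(incidence (insert w (insert v S)) (insert w S) :: 'k)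
      = (-1) ^ (a + (if w < v then 1 else 0))" .
  have "(incidence (insert w (insert v S)) (insert v S) :: 'k)
      = (-1) ^ card {u \<in> insert v S. u < w}"
    by (rule incidence_insert) (use assms in auto)
  also have "\<dots> = (-1) ^ (b + (if v < w then 1 else 0))"
    using assms by (simp only: b_def card_less_insert[OF assms(1,3,5)])
  finally have wv: "(incidence (insert w (insert v S)) (insert v S) :: 'k)
      = (-1) ^ (b + (if v < w then 1 else 0))" .
  have w: "incidence (insert w S) S = ((-1) ^ b :: 'k)"
    and v: "incidence (insert v S) S = ((-1) ^ a :: 'k)"
    using assms by (simp_all add: incidence_insert a_def b_def)
  show ?thesis unfolding vw wv w v using \<open>v \<noteq> w\<close>
    by (cases "v < w") (simp_all add: mult.commute)
qed

lemma finite_simplices: "simplicial_complex V K \<Longrightarrow> finite (simplices K k)"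
  unfolding simplicial_complex_def simplices_def
  by (rule finite_subset[of _ "Pow V"]) auto

lemma chain_eq_0_if_card_ne:
  "z \<in> chains K k \<Longrightarrow> card \<sigma> \<noteq> k + 1 \<Longrightarrow> z \<sigma> = 0"
  unfolding chains_def simplices_def by auto

lemma boundary_eq_sum_insert:
  assumes K: "simplicial_complex V K" and f: "f \<in> chains K k"
  shows "boundary K k f \<rho> = (\<Sum>w\<in>V - \<rho>. f (insert w \<rho>) * (incidence (insert w \<rho>) \<rho> :: 'k::field))"
proof -
  define h where "h \<sigma> = f \<sigma> * (incidence \<sigma> \<rho> :: 'k)" for \<sigma>
  define A where "A = simplices K k \<inter> (\<lambda>w. insert w \<rho>) ` (V - \<rho>)"
  have V: "finite V" "\<forall>\<sigma>\<in>K. \<sigma> \<subseteq> V" using K unfolding simplicial_complex_def by auto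
  have "boundary K k f \<rho> = sum h (simplices K k)" unfolding boundary_def h_def by simp
  also have "\<dots> = sum h A"
  proof (rule sum.mono_neutral_right[OF finite_simplices[OF K]])
    show "A \<subseteq> simplices K k" unfolding A_def by auto
    show "\<forall>\<sigma>\<in>simplices K k - A. h \<sigma> = 0"
    proof (rule ballI, rule ccontr)
      fix \<sigma> assume s: "\<sigma> \<in> simplices K k - A" and "h \<sigma> \<noteq> 0"
      then have "(incidence \<sigma> \<rho> :: 'k) \<noteq> 0" unfolding h_def by auto
      then obtain w where "w \<notin> \<rho>" "\<sigma> = insert w \<rho>" by (rule incidence_nonzero_imp_insert)
      then show False using s V unfolding A_def simplices_def by auto
    qed
  qed
  also have "\<dots> = sum h ((\<lambda>w. insert w \<rho>) ` (V - \<rho>))"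
  proof (rule sum.mono_neutral_left)
    show "finite ((\<lambda>w. insert w \<rho>) ` (V - \<rho>))" using V by simp
    show "A \<subseteq> (\<lambda>w. insert w \<rho>) ` (V - \<rho>)" unfolding A_def by blast
    show "\<forall>\<sigma>\<in>(\<lambda>w. insert w \<rho>) ` (V - \<rho>) - A. h \<sigma> = 0"
      using f unfolding A_def h_def chains_def by auto
  qed
  also have "\<dots> = (\<Sum>w\<in>V - \<rho>. h (insert w \<rho>))"
    by (rule sum.reindex[unfolded comp_def]) (auto simp: inj_on_def)
  finally show ?thesis unfolding h_def .
qed

lemma boundary_in_chains:
  fixes f :: "nat set \<Rightarrow> 'k::field"
  assumes "simplicial_complex V K"
  shows "boundary K (k + 1) f \<in> chains K k"
proof -
  have "boundary K (k + 1) f \<rho> = 0" if \<rho>: "\<rho> \<notin> simplices K k" for \<rho>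
  proof -
    have "f \<sigma> * incidence \<sigma> \<rho> = 0" if s: "\<sigma> \<in> simplices K (k + 1)" for \<sigma>
    proof (rule ccontr)
      assume nz: "f \<sigma> * incidence \<sigma> \<rho> \<noteq> 0"
      then obtain w where w: "w \<notin> \<rho>" "\<sigma> = insert w \<rho>"
        by (auto elim: incidence_nonzero_imp_insert)
      have "\<rho> \<noteq> {}" using nz unfolding incidence_def by (auto split: if_splits)
      moreover have "finite \<rho>" using nz incidence_infinite by (metis mult_zero_right)
      ultimately have "\<rho> \<in> K" "card \<rho> = k + 1"
        using s w assms unfolding simplices_def simplicial_complex_def by auto
      then show False using \<rho> unfolding simplices_def by auto
    qed
    then show ?thesis unfolding boundary_def by (intro sum.neutral) auto
  qed
  then show ?thesis unfolding chains_def by auto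
qed

lemma chains_subset_span:
  assumes "finite (simplices K k)"
  shows "(chains K k :: (nat set \<Rightarrow> 'k::field) set) \<subseteq>
     module.span (fscale :: 'k \<Rightarrow> _) ((\<lambda>\<sigma> \<tau>. if \<tau> = \<sigma> then 1 else 0) ` simplices K k)"
proof
  interpret V: vector_space "fscale :: 'k \<Rightarrow> (nat set \<Rightarrow> 'k) \<Rightarrow> _" by (rule vector_space_fscale)
  fix f :: "nat set \<Rightarrow> 'k" assume f: "f \<in> chains K k"
  have "f = (\<Sum>\<sigma>\<in>simplices K k. fscale (f \<sigma>) (\<lambda>\<tau>. if \<tau> = \<sigma> then 1 else 0))"
  proof
    fix \<rho>
    have "(\<Sum>\<sigma>\<in>simplices K k. fscale (f \<sigma>) (\<lambda>\<tau>. if \<tau> = \<sigma> then 1 else 0)) \<rho>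
        = (\<Sum>\<sigma>\<in>simplices K k. if \<rho> = \<sigma> then f \<sigma> else 0)"
      using assms by (induction rule: finite_induct) (auto simp: fscale_def)
    also have "\<dots> = f \<rho>" using f assms unfolding chains_def by auto
    finally show "f \<rho> = (\<Sum>\<sigma>\<in>simplices K k. fscale (f \<sigma>) (\<lambda>\<tau>. if \<tau> = \<sigma> then 1 else 0)) \<rho>" ..
  qed
  also have "\<dots> \<in> V.span ((\<lambda>\<sigma> \<tau>. if \<tau> = \<sigma> then 1 else 0) ` simplices K k)"
    by (intro V.span_sum V.span_scale V.span_base) auto
  finally show "f \<in> V.span ((\<lambda>\<sigma> \<tau>. if \<tau> = \<sigma> then 1 else 0) ` simplices K k)" .
qed

text \<open>\<open>dim\<close> is \<open>0\<close> on infinite-dimensional spans, so monotonicity needs a finite spanning set.\<close>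
lemma dim_mono_finite_span:
  assumes "vector_space scale" "Z \<subseteq> B" "B \<subseteq> module.span scale F" "finite F"
  shows "vector_space.dim scale Z \<le> vector_space.dim scale B"
proof -
  interpret V: vector_space scale by (rule assms(1))
  obtain b where b: "b \<subseteq> B" "V.independent b" "B \<subseteq> V.span b" "card b = V.dim B"
    by (rule V.basis_exists)
  have "finite b" using V.independent_span_bound[OF assms(4) b(2)] b(1) assms(3) by blast
  then show ?thesis using V.dim_le_card[of Z b] assms(2) b(3,4) by auto
qed

lemma betti_eq_0_if_cycles_subset_boundaries:
  assumes K: "simplicial_complex V K"
    and "(cycles K k :: (nat set \<Rightarrow> 'k::field) set) \<subseteq> boundaries K k"
  shows "betti TYPE('k) K k = 0"
proof -
  have "(boundaries K k :: (nat set \<Rightarrow> 'k) set) \<subseteq> chains K k"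
    unfolding boundaries_def using boundary_in_chains[OF K] by blast
  then have "vector_space.dim (fscale :: 'k \<Rightarrow> _) (cycles K k :: (nat set \<Rightarrow> 'k) set)
      \<le> vector_space.dim (fscale :: 'k \<Rightarrow> _) (boundaries K k :: (nat set \<Rightarrow> 'k) set)"
    using dim_mono_finite_span[OF vector_space_fscale assms(2)]
      chains_subset_span[OF finite_simplices[OF K]] finite_simplices[OF K] by blast
  then show ?thesis unfolding betti_def by simp
qed

subsection \<open>Cones are acyclic in positive degrees\<close>

lemma cone_chain_in_chains: "cone_chain K v k z \<in> chains K (k + 1)"
  unfolding chains_def cone_chain_def by (simp split: if_splits)

lemma cone_chain_insert_apex:
  assumes apex: "edge_cone_apex K v" and "k > 0" and z: "z \<in> chains K k" and "v \<notin> \<rho>"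
  shows "cone_chain K v k z (insert v \<rho>) = incidence (insert v \<rho>) \<rho> * z \<rho>"
proof (cases "z \<rho> = 0")
  case True
  then show ?thesis using \<open>v \<notin> \<rho>\<close> by (simp add: cone_chain_def)
next
  case False
  then have "\<rho> \<in> K" and card: "card \<rho> = k + 1"
    using z unfolding chains_def simplices_def by auto
  then have "insert v \<rho> \<in> K" using apex \<open>k > 0\<close> unfolding edge_cone_apex_def by auto
  moreover have "finite \<rho>" using card by (intro card_ge_0_finite) simp
  then have "card (insert v \<rho>) = k + 2" using card \<open>v \<notin> \<rho>\<close> by simp
  ultimately have "insert v \<rho> \<in> simplices K (k + 1)" unfolding simplices_def by simp
  then show ?thesis using \<open>v \<notin> \<rho>\<close> by (simp add: cone_chain_def)
qed

lemma boundary_cone_chain_without_apex: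
  assumes K: "simplicial_complex V K" and apex: "edge_cone_apex K v" and "v \<in> V"
    and "k > 0" and z: "z \<in> chains K k" and "v \<notin> \<rho>"
  shows "boundary K (k + 1) (cone_chain K v k z) \<rho> = z \<rho>"
proof -
  let ?c = "cone_chain K v k z"
  have "boundary K (k + 1) ?c \<rho> = (\<Sum>w\<in>V - \<rho>. ?c (insert w \<rho>) * incidence (insert w \<rho>) \<rho>)"
    by (rule boundary_eq_sum_insert[OF K cone_chain_in_chains])
  also have "\<dots> = (\<Sum>w\<in>{v}. ?c (insert w \<rho>) * incidence (insert w \<rho>) \<rho>)"
    using \<open>v \<in> V\<close> \<open>v \<notin> \<rho>\<close> K unfolding simplicial_complex_def
    by (intro sum.mono_neutral_right) (auto simp: cone_chain_def)
  also have "\<dots> = z \<rho> * (incidence (insert v \<rho>) \<rho> * incidence (insert v \<rho>) \<rho>)"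
    by (simp add: cone_chain_insert_apex[OF apex \<open>k > 0\<close> z \<open>v \<notin> \<rho>\<close>] ac_simps)
  also have "\<dots> = z \<rho>"
  proof (cases "z \<rho> = 0")
    case False
    then have "card \<rho> = k + 1" using z unfolding chains_def simplices_def by auto
    then have "finite \<rho>" "\<rho> \<noteq> {}" by (auto intro: card_ge_0_finite)
    then show ?thesis using \<open>v \<notin> \<rho>\<close> by (simp add: incidence_insert_squared)
  qed simp
  finally show ?thesis .
qed

lemma boundary_cone_chain_with_apex:
  assumes K: "simplicial_complex V K" and apex: "edge_cone_apex K v" and "v \<in> V"
    and "k > 0" and z: "z \<in> cycles K k" and "v \<in> \<rho>" and "finite \<rho>"
  shows "boundary K (k + 1) (cone_chain K v k z) \<rho> = z \<rho>"
proof -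
  define S where "S = \<rho> - {v}"
  have \<rho>: "\<rho> = insert v S" "v \<notin> S" "finite S" using assms(6,7) unfolding S_def by auto
  have zc: "z \<in> chains K k" and zb: "boundary K k z = (\<lambda>_. 0)" using z by (auto simp: cycles_def)
  let ?c = "cone_chain K v k z" and ?d = "\<lambda>w. z (insert w S) * incidence (insert w S) S"
  have bd: "boundary K (k + 1) ?c \<rho> = (\<Sum>w\<in>V - \<rho>. ?c (insert w \<rho>) * incidence (insert w \<rho>) \<rho>)"
    by (rule boundary_eq_sum_insert[OF K cone_chain_in_chains])
  have c: "?c (insert w \<rho>) = incidence (insert w \<rho>) (insert w S) * z (insert w S)"
    if "w \<notin> \<rho>" for w
    using cone_chain_insert_apex[OF apex \<open>k > 0\<close> zc, of "insert w S"] that \<rho>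
    by (simp add: insert_commute)
  show ?thesis
  proof (cases "S = {}")
    case True
    then show ?thesis
      using bd c chain_eq_0_if_card_ne[OF zc] \<open>k > 0\<close> \<rho>(1) by simp
  next
    case False
    have "boundary K (k + 1) ?c \<rho> = (\<Sum>w\<in>V - \<rho>. - incidence \<rho> S * ?d w)"
      unfolding bd
    proof (rule sum.cong[OF refl])
      fix w assume "w \<in> V - \<rho>"
      then have w: "w \<notin> \<rho>" "w \<noteq> v" "w \<notin> S" using \<rho> by auto
      have "?c (insert w \<rho>) * incidence (insert w \<rho>) \<rho>
          = (incidence (insert w \<rho>) (insert w S) * incidence (insert w \<rho>) \<rho>) * z (insert w S)"
        by (simp add: c[OF w(1)] ac_simps)
      also have "\<dots> = - (incidence (insert w S) S * incidence \<rho> S) * z (insert w S)"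
        using incidence_insert_insert[OF \<rho>(3) False \<rho>(2) w(3) not_sym[OF w(2)]]
        unfolding \<rho>(1) by (rule arg_cong)
      finally show "?c (insert w \<rho>) * incidence (insert w \<rho>) \<rho> = - incidence \<rho> S * ?d w"
        by (simp add: algebra_simps)
    qed
    also have "\<dots> = - incidence \<rho> S * (\<Sum>w\<in>V - \<rho>. ?d w)"
      by (simp add: sum_distrib_left)
    also have "(\<Sum>w\<in>V - \<rho>. ?d w) = - (z \<rho> * incidence \<rho> S)"
    proof -
      have "V - S = insert v (V - \<rho>)" using \<rho> \<open>v \<in> V\<close> by auto
      moreover have "finite V" using K by (simp add: simplicial_complex_def)
      ultimately have "(\<Sum>w\<in>V - S. ?d w) = ?d v + (\<Sum>w\<in>V - \<rho>. ?d w)"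
        using \<open>v \<in> \<rho>\<close> by simp
      moreover have "(\<Sum>w\<in>V - S. ?d w) = 0"
        using boundary_eq_sum_insert[OF K zc, of S] zb by simp
      ultimately have "(\<Sum>w\<in>V - \<rho>. ?d w) = - ?d v"
        by (simp add: eq_neg_iff_add_eq_0 add.commute)
      then show ?thesis by (simp only: \<rho>(1)[symmetric])
    qed
    also have "- incidence \<rho> S * - (z \<rho> * incidence \<rho> S) = z \<rho> * (incidence \<rho> S * incidence \<rho> S)"
      by (simp add: algebra_simps)
    also have "\<dots> = z \<rho>" using \<rho> False by (simp add: incidence_insert_squared)
    finally show ?thesis .
  qed
qed

lemma boundary_cone_chain:
  assumes K: "simplicial_complex V K" and apex: "edge_cone_apex K v" and "v \<in> V"
    and "k > 0" and z: "z \<in> cycles K k"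
  shows "boundary K (k + 1) (cone_chain K v k z) = z"
proof
  fix \<rho>
  have zc: "z \<in> chains K k" using z by (simp add: cycles_def)
  consider "v \<notin> \<rho>" | "v \<in> \<rho>" "finite \<rho>" | "infinite \<rho>" by blast
  then show "boundary K (k + 1) (cone_chain K v k z) \<rho> = z \<rho>"
  proof cases
    case 3
    then show ?thesis using chain_eq_0_if_card_ne[OF zc, of \<rho>]
      by (simp add: boundary_def incidence_infinite)
  qed (use boundary_cone_chain_without_apex[OF K apex \<open>v \<in> V\<close> \<open>k > 0\<close> zc]
         boundary_cone_chain_with_apex[OF assms] in auto)
qed

lemma betti_eq_0_if_edge_cone_apex:
  assumes "simplicial_complex V K" "edge_cone_apex K v" "v \<in> V" "k > 0"
  shows "betti TYPE('k::field) K k = 0"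
proof (rule betti_eq_0_if_cycles_subset_boundaries[OF assms(1)])
  show "(cycles K k :: (nat set \<Rightarrow> 'k) set) \<subseteq> boundaries K k"
    unfolding boundaries_def
    using boundary_cone_chain[OF assms] cone_chain_in_chains by (metis image_eqI subsetI)
qed

lemma simplicial_complex_clique_complex: "simplicial_complex {..<n} (clique_complex n E)"
  unfolding simplicial_complex_def clique_complex_def by auto

lemma edge_cone_apex_clique_complex:
  assumes sym: "\<And>i j. E i j = E j i" and "v < n"
    and cone: "\<And>i j. E i j \<Longrightarrow> j \<noteq> v \<Longrightarrow> E v j"
  shows "edge_cone_apex (clique_complex n E) v"
  unfolding edge_cone_apex_def
proof (intro ballI impI)
  fix \<sigma> assume \<sigma>: "\<sigma> \<in> clique_complex n E" and "card \<sigma> \<ge> 2"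
  have "E v i" if "i \<in> \<sigma>" "i \<noteq> v" for i
  proof -
    have "\<not> \<sigma> \<subseteq> {i}" using card_mono[of "{i}" \<sigma>] \<open>card \<sigma> \<ge> 2\<close> by auto
    then obtain j where "j \<in> \<sigma>" "j \<noteq> i" by blast
    then have "E j i" using \<sigma> \<open>i \<in> \<sigma>\<close> unfolding clique_complex_def by auto
    then show ?thesis using cone \<open>i \<noteq> v\<close> by blast
  qed
  then show "insert v \<sigma> \<in> clique_complex n E"
    using \<sigma> \<open>v < n\<close> sym unfolding clique_complex_def by auto
qed

lemma order_entry_mono:
  assumes "M (min a b) (max a b) \<le> M (min i j) (max i j)"
  shows "order_entry n M a b \<le> order_entry n M i j"
  unfolding order_entry_def
  by (rule card_mono, rule finite_subset[of _ "{..<n} \<times> {..<n}"]) (use assms in auto)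

lemma G_t_sym: "G_t n M t i j = G_t n M t j i"
  unfolding G_t_def order_entry_def by (auto simp: min.commute max.commute)

lemma G_t_cone:
  assumes sym: "\<And>i j. i < n \<Longrightarrow> j < n \<Longrightarrow> M i j = M j i"
    and min: "\<And>i j. i < n \<Longrightarrow> j < n \<Longrightarrow> M v j \<le> M i j" and "v < n"
    and "G_t n M t i j" "j \<noteq> v"
  shows "G_t n M t v j"
proof -
  have "M (min a b) (max a b) = M a b" if "a < n" "b < n" for a b
    using sym[OF that] by (cases "a \<le> b") (auto simp: min_def max_def)
  then have "order_entry n M v j \<le> order_entry n M i j"
    using assms by (intro order_entry_mono) (auto simp: G_t_def)
  then show ?thesis using assms by (auto simp: G_t_def)
qed

lemma column_minimising_vertex:
  fixes n :: nat
  assumes "n > 0" and M: "\<And>i j. i < n \<Longrightarrow> j < n \<Longrightarrow> M i j = f i * g j"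
    and g: "\<And>j. j < n \<Longrightarrow> g j > (0 :: 'a::linordered_idom)"
  obtains v where "v < n" "\<And>i j. i < n \<Longrightarrow> j < n \<Longrightarrow> M v j \<le> M i j"
proof -
  have "Min (f ` {..<n}) \<in> f ` {..<n}" using \<open>n > 0\<close> by (intro Min_in finite_imageI) auto
  then obtain v where "v < n" "f v = Min (f ` {..<n})" by auto
  then have "f v \<le> f i" if "i < n" for i using that by simp
  then show ?thesis using that \<open>v < n\<close> M g by (simp add: mult_right_mono less_imp_le)
qed

lemma signed_rank_one_factorization:
  fixes x :: "nat \<Rightarrow> 'a::linordered_idom"
  assumes "(\<forall>i<n. x i > 0) \<or> (\<forall>i<n. x i < 0)"
    and "(\<forall>i<n. \<forall>j<n. M i j = x i * x j) \<or> (\<forall>i<n. \<forall>j<n. M i j = - (x i * x j))"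
  obtains f g where "\<And>i j. i < n \<Longrightarrow> j < n \<Longrightarrow> M i j = f i * g j" "\<And>j. j < n \<Longrightarrow> g j > 0"
proof -
  consider "\<forall>i<n. x i > 0" "\<forall>i<n. \<forall>j<n. M i j = x i * x j"
    | "\<forall>i<n. x i < 0" "\<forall>i<n. \<forall>j<n. M i j = x i * x j"
    | "\<forall>i<n. x i > 0" "\<forall>i<n. \<forall>j<n. M i j = - (x i * x j)"
    | "\<forall>i<n. x i < 0" "\<forall>i<n. \<forall>j<n. M i j = - (x i * x j)"
    using assms by blast
  then show ?thesis
  proof cases
    case 1 then show ?thesis by (intro that[of x x]) auto
  next
    case 2 then show ?thesis by (intro that[of "\<lambda>i. - x i" "\<lambda>i. - x i"]) auto
  next
    case 3 then show ?thesis by (intro that[of "\<lambda>i. - x i" x]) auto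
  next
    case 4 then show ?thesis by (intro that[of x "\<lambda>i. - x i"]) auto
  qed
qed

theorem theorem1:
  fixes n :: nat and x :: "nat \<Rightarrow> real" and M :: "nat \<Rightarrow> nat \<Rightarrow> real"
    and k :: nat and t :: real
  assumes "n \<ge> 2"
    and "(\<forall>i<n. x i > 0) \<or> (\<forall>i<n. x i < 0)"
    and "(\<forall>i<n. \<forall>j<n. M i j = x i * x j) \<or> (\<forall>i<n. \<forall>j<n. M i j = - (x i * x j))"
    and "\<forall>i j a b. i < j \<and> j < n \<and> a < b \<and> b < n \<and> (i, j) \<noteq> (a, b) \<longrightarrow> M i j \<noteq> M a b"
    and "k > 0"
    and "0 \<le> t" and "t \<le> 1"
  shows "betti_curve TYPE('k::field) n M k t = 0"
proof -
  obtain f g where fg: "\<And>i j. i < n \<Longrightarrow> j < n \<Longrightarrow> M i j = f i * g j"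
    and g: "\<And>j. j < n \<Longrightarrow> g j > 0"
    using signed_rank_one_factorization[OF assms(2,3)] by blast
  have "n > 0" using \<open>n \<ge> 2\<close> by simp
  then obtain v where "v < n" and min: "\<And>i j. i < n \<Longrightarrow> j < n \<Longrightarrow> M v j \<le> M i j"
    using column_minimising_vertex fg g by metis
  have sym: "\<And>i j. i < n \<Longrightarrow> j < n \<Longrightarrow> M i j = M j i"
    using assms(3) by (auto simp: mult.commute)
  have "edge_cone_apex (clique_complex n (G_t n M t)) v"
    using G_t_cone[where n = n and M = M and v = v, OF sym min \<open>v < n\<close>]
    by (intro edge_cone_apex_clique_complex G_t_sym \<open>v < n\<close>)
  then show ?thesis unfolding betti_curve_def
    by (rule betti_eq_0_if_edge_cone_apex[OF simplicial_complex_clique_complex])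
      (use \<open>v < n\<close> \<open>k > 0\<close> in auto)
qed

end
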